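(* Let $\alpha$ be irrational with continued fraction $[0;a_1,a_2,\dots]$ and convergent denominators $(q_k)$. Let $q=\frac rs\in[0,1)$ be rational and $f(x)=\log(\{x-q\})$. Let $N\in\mathbb{N}$ with $N<\frac{q_K}{s}$ and write $N=b_{K-1}q_{K-1}+N'$ with integers $b_{K-1}\ge0$ and $0\le N'<q_{K-1}$. Then $$\big|S_{N'}(f,\alpha,b_{K-1}q_{K-1}\alpha)\big|\ll\log(q_{K+1})\sum_{\ell=1}^{K-1}a_\ell,$$ with implied constant independent of $N$ and $K$.
   Context: $\{x\}$ is the fractional part; $q_0=1,q_1=a_1,q_{k+1}=a_{k+1}q_k+q_{k-1}$. For $1$-periodic integrable $f$, $S_M(f,\alpha,y):=\sum_{n=1}^M f(n\alpha+y)-M\int_0^1 f(x)\,dx$. *)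

theory Defs
  imports "HOL-Analysis.Analysis"
begin

fun cf_rem :: "real \<Rightarrow> nat \<Rightarrow> real" where
  "cf_rem \<alpha> 0 = frac \<alpha>"
| "cf_rem \<alpha> (Suc k) = frac (1 / cf_rem \<alpha> k)"

fun cf_digit :: "real \<Rightarrow> nat \<Rightarrow> int" where
  "cf_digit \<alpha> 0 = \<lfloor>\<alpha>\<rfloor>"
| "cf_digit \<alpha> (Suc k) = \<lfloor>1 / cf_rem \<alpha> k\<rfloor>"

fun cf_den :: "real \<Rightarrow> nat \<Rightarrow> int" where
  "cf_den \<alpha> 0 = 1"
| "cf_den \<alpha> (Suc 0) = cf_digit \<alpha> 1"
| "cf_den \<alpha> (Suc (Suc k)) = cf_digit \<alpha> (Suc (Suc k)) * cf_den \<alpha> (Suc k) + cf_den \<alpha> k"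

definition birkhoff_S :: "(real \<Rightarrow> real) \<Rightarrow> nat \<Rightarrow> real \<Rightarrow> real \<Rightarrow> real" where
  "birkhoff_S f M \<alpha> y = (\<Sum>n=1..M. f (real n * \<alpha> + y)) - real M * integral {0..1} f"

end

(*
  Since the integral of ln {x - q} over a period is -1, the sum equals
  sum_n ln {n alpha + y - q} + N'. Ostrowski's greedy decomposition cuts the orbit segment of
  length N' < q_(K-1) into at most a_1 + ... + a_(K-1) blocks of lengths q_j with j < K - 1.
  Along a block of length Q = q_j the relation |Q alpha - p_j| < 1/Q with coprime p_j, Q puts
  exactly one point in each cell [m/Q, (m+1)/Q), up to a shift of one cell; comparing with
  ln Q! = Q ln Q - Q + O(ln Q) gives block sums -Q + O(ln Q + |ln d|), where d is a lower bound
  for the distance of the points to the singularity. All indices m of the segment satisfy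
  s m < q_K, so the best approximation property of q_K gives {m alpha - r/s} >= 1/(s q_K q_(K+1)),
  whence |ln d| = O(ln q_(K+1)) with a constant depending only on s.
*)
theory Submission
  imports Defs "HOL-Real_Asymp.Real_Asymp"
begin

lemma continuous_on_x_ln_x_minus_x: "continuous_on {0..} (\<lambda>u::real. u * ln u - u)"
proof -
  have "continuous (at u within {0..}) (\<lambda>u::real. u * ln u - u)" if "u \<ge> 0" for u
  proof (cases "u = 0")
    case True
    have "((\<lambda>u::real. u * ln u - u) \<longlongrightarrow> 0) (at_right 0)" by real_asymp
    then show ?thesis
      using True by (simp add: continuous_within at_within_Ici_at_right)
  next
    case False
    with that show ?thesis by (auto intro!: continuous_intros)
  qed
  then show ?thesis
    using continuous_on_eq_continuous_within by blast
qed

lemma has_integral_ln_shift: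
  fixes c u v :: real
  assumes "u \<le> v" "0 \<le> u + c"
  shows "((\<lambda>x. ln (x + c)) has_integral
           ((v + c) * ln (v + c) - (v + c) - ((u + c) * ln (u + c) - (u + c)))) {u..v}"
proof (rule fundamental_theorem_of_calculus_interior)
  show "continuous_on {u..v} (\<lambda>x. (x + c) * ln (x + c) - (x + c))"
    by (rule continuous_on_compose2[OF continuous_on_x_ln_x_minus_x])
       (use assms in \<open>auto intro!: continuous_intros\<close>)
  fix x assume "x \<in> {u<..<v}"
  then have "0 < x + c" using assms by auto
  then have "((\<lambda>x. (x + c) * ln (x + c) - (x + c)) has_real_derivative ln (x + c)) (at x)"
    by (auto intro!: derivative_eq_intros)
  then show "((\<lambda>x. (x + c) * ln (x + c) - (x + c)) has_vector_derivative ln (x + c)) (at x)"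
    by (simp add: has_real_derivative_iff_has_vector_derivative)
qed (use assms in auto)

lemma integral_ln_frac_shift:
  fixes q :: real
  assumes "0 \<le> q" "q < 1"
  shows "integral {0..1} (\<lambda>x. ln (frac (x - q))) = -1"
proof -
  have left: "((\<lambda>x. ln (frac (x - q))) has_integral ((q - 1) * ln (1 - q) - q)) {0..q}"
  proof (rule has_integral_spike_finite[OF finite.emptyI[THEN finite.insertI[of _ q]]])
    show "((\<lambda>x. ln (x + (1 - q))) has_integral ((q - 1) * ln (1 - q) - q)) {0..q}"
      using has_integral_ln_shift[of 0 q "1 - q"] assms by (simp add: algebra_simps)
    fix x assume "x \<in> {0..q} - {q}"
    then have "frac (x - q) = x + (1 - q)"
      using assms by (auto simp: frac_unique_iff)
    then show "ln (frac (x - q)) = ln (x + (1 - q))" by simp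
  qed
  have right: "((\<lambda>x. ln (frac (x - q))) has_integral ((1 - q) * ln (1 - q) - (1 - q))) {q..1}"
  proof (rule has_integral_spike_finite[OF finite.emptyI[THEN finite.insertI[of _ 1]]])
    show "((\<lambda>x. ln (x + - q)) has_integral ((1 - q) * ln (1 - q) - (1 - q))) {q..1}"
      using has_integral_ln_shift[of q 1 "- q"] assms by simp
    fix x assume "x \<in> {q..1} - {1}"
    then have "frac (x - q) = x + - q"
      using assms by (auto simp: frac_eq)
    then show "ln (frac (x - q)) = ln (x + - q)" by simp
  qed
  show ?thesis
    using has_integral_combine[OF _ _ left right] assms by (simp add: integral_unique algebra_simps)
qed

lemma birkhoff_S_add:
  "birkhoff_S f (X + Y) \<alpha> y = birkhoff_S f X \<alpha> y + birkhoff_S f Y \<alpha> (y + real X * \<alpha>)"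
proof -
  have "(\<Sum>n=1..X + Y. f (real n * \<alpha> + y))
      = (\<Sum>n=1..X. f (real n * \<alpha> + y)) + (\<Sum>n=X + 1..X + Y. f (real n * \<alpha> + y))"
    by (rule sum.ub_add_nat) simp
  also have "(\<Sum>n=X + 1..X + Y. f (real n * \<alpha> + y)) = (\<Sum>n=1..Y. f (real (n + X) * \<alpha> + y))"
    using sum.shift_bounds_cl_nat_ivl[of "\<lambda>n. f (real n * \<alpha> + y)" 1 X Y]
    by (simp add: add.commute)
  finally show ?thesis
    unfolding birkhoff_S_def by (simp add: algebra_simps)
qed

lemma birkhoff_S_ln_frac:
  assumes "0 \<le> q" "q < 1"
  shows "birkhoff_S (\<lambda>x. ln (frac (x - q))) M \<alpha> y
           = (\<Sum>n=1..M. ln (frac (y - q + real n * \<alpha>))) + real M"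
  unfolding birkhoff_S_def integral_ln_frac_shift[OF assms] by (simp add: algebra_simps)

lemma birkhoff_S_repeated_blocks_bound:
  assumes block: "\<And>y. \<forall>n\<in>{1..Q}. P (real n * \<alpha> + y) \<Longrightarrow> \<bar>birkhoff_S f Q \<alpha> y\<bar> \<le> B"
    and remainder: "\<And>y. \<forall>n\<in>{1..R}. P (real n * \<alpha> + y) \<Longrightarrow> \<bar>birkhoff_S f R \<alpha> y\<bar> \<le> B'"
  shows "\<forall>n\<in>{1..c * Q + R}. P (real n * \<alpha> + y) \<Longrightarrow> \<bar>birkhoff_S f (c * Q + R) \<alpha> y\<bar> \<le> real c * B + B'"
proof (induction c arbitrary: y)
  case 0
  then show ?case using remainder by simp
next
  case (Suc c)
  have first: "\<forall>n\<in>{1..Q}. P (real n * \<alpha> + y)"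
    using Suc.prems by auto
  have rest: "\<forall>n\<in>{1..c * Q + R}. P (real n * \<alpha> + (y + real Q * \<alpha>))"
  proof
    fix n assume "n \<in> {1..c * Q + R}"
    then have "n + Q \<in> {1..Suc c * Q + R}" by auto
    then have "P (real (n + Q) * \<alpha> + y)"
      using Suc.prems by blast
    then show "P (real n * \<alpha> + (y + real Q * \<alpha>))"
      by (simp add: algebra_simps)
  qed
  have "Suc c * Q + R = Q + (c * Q + R)" by simp
  then have "\<bar>birkhoff_S f (Suc c * Q + R) \<alpha> y\<bar>
      \<le> \<bar>birkhoff_S f Q \<alpha> y\<bar> + \<bar>birkhoff_S f (c * Q + R) \<alpha> (y + real Q * \<alpha>)\<bar>"
    by (metis birkhoff_S_add abs_triangle_ineq)
  also have "\<dots> \<le> B + (real c * B + B')"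
    using block[OF first] Suc.IH[OF rest] by simp
  finally show ?case by (simp add: algebra_simps)
qed

text \<open>Ostrowski decomposition: a segment shorter than Qs k is cut greedily into at most A k
  blocks of length Qs (k - 1) and a remainder shorter than Qs (k - 1).\<close>
lemma birkhoff_S_greedy_blocks_bound:
  fixes Qs A :: "nat \<Rightarrow> nat" and B :: real
  assumes Qs0: "Qs 0 = 1" and Qs_Suc: "\<And>j. Qs (Suc j) \<le> (A (Suc j) + 1) * Qs j"
    and Qs_pos: "\<And>j. 1 \<le> Qs j" and B: "0 \<le> B"
    and block: "\<And>j y. j < k \<Longrightarrow> \<forall>n\<in>{1..Qs j}. P (real n * \<alpha> + y)
                  \<Longrightarrow> \<bar>birkhoff_S f (Qs j) \<alpha> y\<bar> \<le> B"
  shows "M < Qs k \<Longrightarrow> \<forall>n\<in>{1..M}. P (real n * \<alpha> + y)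
           \<Longrightarrow> \<bar>birkhoff_S f M \<alpha> y\<bar> \<le> (\<Sum>l=1..k. real (A l)) * B"
  using block
proof (induction k arbitrary: M y)
  case 0
  then show ?case using Qs0 by (simp add: birkhoff_S_def)
next
  case (Suc k)
  let ?Q = "Qs k" and ?S = "(\<Sum>l=1..k. real (A l))"
  have "M < (A (Suc k) + 1) * ?Q" using Suc.prems(1) Qs_Suc[of k] by simp
  then have "M div ?Q < A (Suc k) + 1"
    using Qs_pos[of k] by (simp add: div_less_iff_less_mult mult.commute)
  then have "real (M div ?Q) * B \<le> real (A (Suc k)) * B"
    using B by (simp add: mult_right_mono)
  moreover have "\<bar>birkhoff_S f (M div ?Q * ?Q + M mod ?Q) \<alpha> y\<bar> \<le> real (M div ?Q) * B + ?S * B"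
  proof (rule birkhoff_S_repeated_blocks_bound)
    show "\<bar>birkhoff_S f (M mod ?Q) \<alpha> y'\<bar> \<le> ?S * B" if "\<forall>n\<in>{1..M mod ?Q}. P (real n * \<alpha> + y')" for y'
      using Suc.IH[of "M mod ?Q" y'] Suc.prems(3) that Qs_pos[of k] by simp
  qed (use Suc.prems in simp_all)
  ultimately show ?case by (simp add: algebra_simps)
qed

lemma sum_ln_nat_bounds:
  assumes "1 \<le> n"
  shows "real n * ln n - n + 1 \<le> (\<Sum>i=1..n. ln (real i))
         \<and> (\<Sum>i=1..n. ln (real i)) \<le> real n * ln n - n + 1 + ln n"
  using assms
proof (induction n rule: dec_induct)
  case base
  then show ?case by simp
next
  case (step n)
  have n: "1 \<le> real n" using step.hyps by simp
  have "1 + 1 / n = (real n + 1) / n"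
    using n by (simp add: field_simps)
  then have "ln (real n + 1) - ln n = ln (1 + 1 / n)"
    using n by (simp add: ln_div)
  also have "\<dots> \<le> 1 / n"
    by (rule ln_add_one_self_le_self) simp
  finally have up: "real n * (ln (real n + 1) - ln n) \<le> 1"
    using n by (simp add: field_simps)
  have "ln n - ln (real n + 1) = ln (n / (real n + 1))"
    using n by (simp add: ln_div)
  also have "\<dots> \<le> n / (real n + 1) - 1"
    using n by (intro ln_le_minus_one) simp
  finally have lo: "1 \<le> (real n + 1) * (ln (real n + 1) - ln n)"
    using n by (simp add: field_simps)
  show ?case
    using step.IH up lo by (simp add: algebra_simps)
qed

lemma sum_ln_div_bounds:
  assumes "1 \<le> Q"
  shows "1 - real Q \<le> (\<Sum>i=1..Q. ln (real i / Q)) \<and> (\<Sum>i=1..Q. ln (real i / Q)) \<le> ln Q + 1 - Q"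
proof -
  have "(\<Sum>i=1..Q. ln (real i / Q)) = (\<Sum>i=1..Q. ln (real i)) - real Q * ln Q"
    using assms by (simp add: ln_div sum_subtractf)
  then show ?thesis
    using sum_ln_nat_bounds[OF assms] by linarith
qed

lemma sum_ln_grid_right_ends_le:
  "(\<Sum>m\<in>{1..Q-2}. ln ((real m + 2) / Q)) \<le> 3 * ln Q + 1 - Q"
proof (cases "Q \<ge> 2")
  case True
  have "{3..Q} = {1 + 2..(Q - 2) + 2}" using True by auto
  then have "(\<Sum>m\<in>{1..Q-2}. ln ((real m + 2) / Q)) = (\<Sum>i\<in>{3..Q}. ln (real i / Q))"
    by (simp only: sum.shift_bounds_cl_nat_ivl) (simp add: add.commute)
  moreover have "{1..Q} = insert 1 (insert 2 {3..Q})" using True by auto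
  then have "(\<Sum>i=1..Q. ln (real i / Q)) = ln (1 / Q) + ln (2 / Q) + (\<Sum>i\<in>{3..Q}. ln (real i / Q))"
    by simp
  moreover have "- 2 * ln Q \<le> ln (1 / Q) + ln (2 / Q)"
    using True by (simp add: ln_div)
  ultimately show ?thesis
    using sum_ln_div_bounds[of Q] True by linarith
next
  case False
  then have "Q = 0 \<or> Q = 1" by auto
  then show ?thesis by auto
qed

lemma sum_ln_grid_left_ends_ge:
  assumes "1 \<le> Q"
  shows "1 - real Q \<le> (\<Sum>m\<in>{2..Q-2}. ln ((real m - 1) / Q))"
proof -
  have "1 - real Q \<le> (\<Sum>i=1..Q. ln (real i / Q))"
    using sum_ln_div_bounds[OF assms] by blast
  also have "\<dots> = (\<Sum>i\<in>{1..Q} - {1..Q-3}. ln (real i / Q)) + (\<Sum>i\<in>{1..Q-3}. ln (real i / Q))"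
    by (rule sum.subset_diff) auto
  also have "\<dots> \<le> (\<Sum>i\<in>{1..Q-3}. ln (real i / Q))"
    by (auto intro!: sum_nonpos)
  also have "\<dots> = (\<Sum>m\<in>{2..Q-2}. ln ((real m - 1) / Q))"
  proof (cases "Q \<ge> 3")
    case True
    then have "{2..Q-2} = {1 + 1..(Q - 3) + 1}" by auto
    then show ?thesis
      by (simp only: sum.shift_bounds_cl_nat_ivl) simp
  qed auto
  finally show ?thesis .
qed

text \<open>In the next two lemmas \<sigma> n locates x n in the grid of mesh 1 / Q up to one cell either way.\<close>

lemma sum_ln_grid_upper:
  fixes x :: "'a \<Rightarrow> real" and \<sigma> :: "'a \<Rightarrow> nat"
  assumes bij: "bij_betw \<sigma> I {..<Q}"
    and x: "\<And>n. n \<in> I \<Longrightarrow> 0 < x n \<and> x n \<le> 1"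
    and upper: "\<And>n. n \<in> I \<Longrightarrow> 1 \<le> \<sigma> n \<Longrightarrow> x n \<le> (real (\<sigma> n) + 2) / Q"
  shows "(\<Sum>n\<in>I. ln (x n)) \<le> 3 * ln Q + 1 - Q"
proof -
  define U where "U m = (if m \<in> {1..Q-2} then ln ((real m + 2) / Q) else 0)" for m
  have "ln (x n) \<le> U (\<sigma> n)" if "n \<in> I" for n
  proof (cases "\<sigma> n \<in> {1..Q-2}")
    case True
    then have "0 < (real (\<sigma> n) + 2) / Q" by auto
    then show ?thesis
      using True x[OF that] upper[OF that] by (simp add: U_def)
  qed (use x[OF that] in \<open>auto simp: U_def\<close>)
  then have "(\<Sum>n\<in>I. ln (x n)) \<le> (\<Sum>n\<in>I. U (\<sigma> n))"
    by (rule sum_mono)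
  also have "\<dots> = (\<Sum>m<Q. U m)"
    by (rule sum.reindex_bij_betw[OF bij])
  also have "\<dots> = (\<Sum>m\<in>{1..Q-2}. ln ((real m + 2) / Q))"
    unfolding U_def by (subst sum.inter_restrict[symmetric]) (auto intro!: sum.cong)
  also have "\<dots> \<le> 3 * ln Q + 1 - Q"
    by (rule sum_ln_grid_right_ends_le)
  finally show ?thesis .
qed

lemma sum_ln_grid_lower:
  fixes x :: "'a \<Rightarrow> real" and \<sigma> :: "'a \<Rightarrow> nat"
  assumes bij: "bij_betw \<sigma> I {..<Q}" and Q: "1 \<le> Q" and d: "0 < d" "d \<le> 1"
    and x: "\<And>n. n \<in> I \<Longrightarrow> d \<le> x n"
    and lower: "\<And>n. n \<in> I \<Longrightarrow> \<sigma> n + 2 \<le> Q \<Longrightarrow> (real (\<sigma> n) - 1) / Q \<le> x n"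
  shows "3 * ln d + 1 - Q \<le> (\<Sum>n\<in>I. ln (x n))"
proof -
  define L where "L m = (if m \<in> {2..Q-2} then ln ((real m - 1) / Q) else ln d)" for m
  define E where "E = {..<Q} - {2..Q-2}"
  have "card E \<le> 3"
  proof -
    have "E \<subseteq> {0, 1, Q - 1}" unfolding E_def by auto
    then have "card E \<le> card {0, 1, Q - 1}" by (intro card_mono) auto
    also have "\<dots> \<le> 3" by (simp add: card_insert_if)
    finally show ?thesis .
  qed
  then have "3 * ln d \<le> real (card E) * ln d"
    using d by (intro mult_right_mono_neg) auto
  also have "\<dots> = (\<Sum>m\<in>E. ln d)"
    by simp
  also have "\<dots> = (\<Sum>m\<in>E. L m)"
    by (rule sum.cong) (auto simp: L_def E_def)
  finally have "3 * ln d + (1 - real Q) \<le> (\<Sum>m\<in>E. L m) + (\<Sum>m\<in>{2..Q-2}. L m)"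
    using sum_ln_grid_left_ends_ge[OF Q] by (simp add: L_def)
  also have "\<dots> = (\<Sum>m<Q. L m)"
    unfolding E_def by (rule sum.subset_diff[symmetric]) auto
  also have "\<dots> = (\<Sum>n\<in>I. L (\<sigma> n))"
    by (rule sum.reindex_bij_betw[OF bij, symmetric])
  also have "\<dots> \<le> (\<Sum>n\<in>I. ln (x n))"
  proof (rule sum_mono)
    fix n assume n: "n \<in> I"
    show "L (\<sigma> n) \<le> ln (x n)"
    proof (cases "\<sigma> n \<in> {2..Q-2}")
      case True
      then have "0 < (real (\<sigma> n) - 1) / Q" "(real (\<sigma> n) - 1) / Q \<le> x n"
        using lower[OF n] by auto
      then show ?thesis
        using True by (simp add: L_def)
    qed (use d x[OF n] in \<open>auto simp: L_def\<close>)
  qed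
  finally show ?thesis by simp
qed

lemma bij_betw_affine_mod:
  fixes G P :: int and Q :: nat
  assumes "coprime P (int Q)"
  shows "bij_betw (\<lambda>n. nat ((G + int n * P) mod int Q)) {1..Q} {..<Q}"
proof -
  let ?\<sigma> = "\<lambda>n. nat ((G + int n * P) mod int Q)"
  have "inj_on ?\<sigma> {1..Q}"
  proof (rule inj_onI)
    fix n n' assume n: "n \<in> {1..Q}" "n' \<in> {1..Q}" and eq: "?\<sigma> n = ?\<sigma> n'"
    then have "(G + int n * P) mod int Q = (G + int n' * P) mod int Q"
      by (simp add: nat_eq_iff2)
    then have "int Q dvd (int n - int n') * P"
      by (simp add: mod_eq_dvd_iff algebra_simps)
    then have "int Q dvd int n - int n'"
      using assms by (simp add: coprime_commute coprime_dvd_mult_left_iff)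
    moreover have "\<bar>int n - int n'\<bar> < int Q" using n by auto
    ultimately have "int n - int n' = 0"
      using dvd_imp_le_int[of "int n - int n'" "int Q"] by (cases "int n - int n' = 0") auto
    then show "n = n'" by simp
  qed
  moreover have "?\<sigma> n < Q" if "n \<in> {1..Q}" for n
    using that by (simp add: nat_less_iff)
  ultimately show ?thesis
    by (simp add: bij_betw_def card_image card_subset_eq image_subset_iff)
qed

lemma frac_grid_point_upper:
  fixes \<theta> :: real and m Q :: nat
  assumes "0 < Q" "-1 < \<theta>" "\<theta> < 2" "1 \<le> m"
  shows "frac ((real m + \<theta>) / Q) \<le> (real m + 2) / Q"
proof -
  have "0 \<le> (real m + \<theta>) / Q"
    using assms by simp
  then have "frac ((real m + \<theta>) / Q) \<le> (real m + \<theta>) / Q"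
    by (simp add: frac_def)
  also have "\<dots> \<le> (real m + 2) / Q"
    using assms by (simp add: divide_right_mono)
  finally show ?thesis .
qed

lemma frac_grid_point_lower:
  fixes \<theta> :: real and m Q :: nat
  assumes Q: "0 < Q" and \<theta>: "-1 < \<theta>" "\<theta> < 2" and m: "m + 2 \<le> Q"
  shows "(real m - 1) / Q \<le> frac ((real m + \<theta>) / Q)"
proof -
  let ?v = "(real m + \<theta>) / Q"
  have "real m + 2 \<le> real Q"
    using m by linarith
  then have "?v < 1"
    using \<theta> Q by simp
  have "(real m - 1) / Q < ?v"
    using \<theta> Q by (simp add: divide_strict_right_mono)
  show ?thesis
  proof (cases "0 \<le> ?v")
    case True
    then show ?thesis
      using \<open>?v < 1\<close> \<open>(real m - 1) / Q < ?v\<close> by (simp add: frac_eq)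
  next
    case False
    then show ?thesis
      using \<open>(real m - 1) / Q < ?v\<close> frac_ge_0[of ?v] by linarith
  qed
qed

lemma frac_orbit_near_grid:
  fixes \<alpha> z :: real and Q :: nat and P :: int
  assumes Q: "1 \<le> Q" and cop: "coprime P (int Q)" and approx: "\<bar>real Q * \<alpha> - P\<bar> < 1 / Q"
  obtains \<sigma> where "bij_betw \<sigma> {1..Q} {..<Q}"
    and "\<And>n. n \<in> {1..Q} \<Longrightarrow> 1 \<le> \<sigma> n \<Longrightarrow> frac (z + real n * \<alpha>) \<le> (real (\<sigma> n) + 2) / Q"
    and "\<And>n. n \<in> {1..Q} \<Longrightarrow> \<sigma> n + 2 \<le> Q \<Longrightarrow> (real (\<sigma> n) - 1) / Q \<le> frac (z + real n * \<alpha>)"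
proof -
  define G where "G = \<lfloor>real Q * z\<rfloor>"
  define \<sigma> where "\<sigma> n = nat ((G + int n * P) mod int Q)" for n
  define \<theta> where "\<theta> n = frac (real Q * z) + real n * (real Q * \<alpha> - P)" for n
  have Q_pos: "0 < Q" using Q by simp
  have \<theta>: "-1 < \<theta> n" "\<theta> n < 2" if "n \<in> {1..Q}" for n
  proof -
    have "\<bar>real n * (real Q * \<alpha> - P)\<bar> \<le> real Q * \<bar>real Q * \<alpha> - P\<bar>"
      using that by (simp add: abs_mult mult_right_mono)
    also have "\<dots> < 1"
      using approx Q_pos by (simp add: field_simps)
    finally show "-1 < \<theta> n" "\<theta> n < 2"
      unfolding \<theta>_def using frac_ge_0[of "real Q * z"] frac_lt_1[of "real Q * z"] by linarith+
  qed
  have frac_eq: "frac (z + real n * \<alpha>) = frac ((real (\<sigma> n) + \<theta> n) / Q)" for n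
  proof -
    define j where "j = (G + int n * P) div int Q"
    have "G + int n * P = int (\<sigma> n) + int Q * j"
      unfolding \<sigma>_def j_def using Q by simp
    then have "real_of_int G + real n * P = real (\<sigma> n) + real Q * j"
      by (metis of_int_add of_int_mult of_int_of_nat_eq)
    then have "z + real n * \<alpha> = (real (\<sigma> n) + \<theta> n) / Q + of_int j"
      using Q_pos unfolding \<theta>_def G_def frac_def by (simp add: field_simps)
    then show ?thesis by simp
  qed
  show ?thesis
  proof
    show "bij_betw \<sigma> {1..Q} {..<Q}"
      unfolding \<sigma>_def using cop by (rule bij_betw_affine_mod)
    show "frac (z + real n * \<alpha>) \<le> (real (\<sigma> n) + 2) / Q" if "n \<in> {1..Q}" "1 \<le> \<sigma> n" for n
      unfolding frac_eq using frac_grid_point_upper[OF Q_pos \<theta>[OF that(1)] that(2)] .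
    show "(real (\<sigma> n) - 1) / Q \<le> frac (z + real n * \<alpha>)" if "n \<in> {1..Q}" "\<sigma> n + 2 \<le> Q" for n
      unfolding frac_eq using frac_grid_point_lower[OF Q_pos \<theta>[OF that(1)] that(2)] .
  qed
qed

lemma sum_ln_frac_orbit_bound:
  fixes \<alpha> z d :: real and Q :: nat and P :: int
  assumes Q: "1 \<le> Q" and "coprime P (int Q)" and "\<bar>real Q * \<alpha> - P\<bar> < 1 / Q"
    and d: "0 < d" and good: "\<forall>n\<in>{1..Q}. d \<le> frac (z + real n * \<alpha>)"
  shows "\<bar>(\<Sum>n=1..Q. ln (frac (z + real n * \<alpha>))) + Q\<bar> \<le> 3 * \<bar>ln d\<bar> + 3 * ln Q + 1"
proof -
  obtain \<sigma> where bij: "bij_betw \<sigma> {1..Q} {..<Q}"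
    and upper: "\<And>n. n \<in> {1..Q} \<Longrightarrow> 1 \<le> \<sigma> n \<Longrightarrow> frac (z + real n * \<alpha>) \<le> (real (\<sigma> n) + 2) / Q"
    and lower: "\<And>n. n \<in> {1..Q} \<Longrightarrow> \<sigma> n + 2 \<le> Q \<Longrightarrow> (real (\<sigma> n) - 1) / Q \<le> frac (z + real n * \<alpha>)"
    using frac_orbit_near_grid[OF assms(1-3)] by blast
  have "d \<le> frac (z + real 1 * \<alpha>)"
    using bspec[OF good, of 1] Q by simp
  then have "d \<le> 1"
    using frac_lt_1[of "z + \<alpha>"] by simp
  have "(\<Sum>n=1..Q. ln (frac (z + real n * \<alpha>))) \<le> 3 * ln Q + 1 - Q"
  proof (rule sum_ln_grid_upper[OF bij _ upper])
    fix n assume "n \<in> {1..Q}"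
    then have "d \<le> frac (z + real n * \<alpha>)"
      using good by blast
    then show "0 < frac (z + real n * \<alpha>) \<and> frac (z + real n * \<alpha>) \<le> 1"
      using d frac_lt_1[of "z + real n * \<alpha>"] by linarith
  qed
  moreover have "3 * ln d + 1 - Q \<le> (\<Sum>n=1..Q. ln (frac (z + real n * \<alpha>)))"
    by (rule sum_ln_grid_lower[OF bij Q d \<open>d \<le> 1\<close> _ lower]) (use good in auto)
  moreover have "ln d \<le> 0" "0 \<le> ln (real Q)"
    using d \<open>d \<le> 1\<close> Q by auto
  ultimately show ?thesis by linarith
qed

fun cf_num :: "real \<Rightarrow> nat \<Rightarrow> int" where
  "cf_num \<alpha> 0 = cf_digit \<alpha> 0"
| "cf_num \<alpha> (Suc 0) = cf_digit \<alpha> 1 * cf_digit \<alpha> 0 + 1"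
| "cf_num \<alpha> (Suc (Suc k)) = cf_digit \<alpha> (Suc (Suc k)) * cf_num \<alpha> (Suc k) + cf_num \<alpha> k"

text \<open>The error |q_k \<alpha> - p_k| of the k-th convergent (see cf_den_mult_sub_cf_num),
  as the product of the complete quotients.\<close>
definition cf_err :: "real \<Rightarrow> nat \<Rightarrow> real" where
  "cf_err \<alpha> k = (\<Prod>i\<le>k. cf_rem \<alpha> i)"

lemma cf_rem_inverse: "1 / cf_rem \<alpha> k = cf_digit \<alpha> (Suc k) + cf_rem \<alpha> (Suc k)"
  by (simp add: frac_def)

lemma cf_rem_less_1: "cf_rem \<alpha> k < 1"
  by (cases k) (simp_all add: frac_lt_1)

lemma cf_err_Suc: "cf_err \<alpha> (Suc k) = cf_err \<alpha> k * cf_rem \<alpha> (Suc k)"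
  by (simp add: cf_err_def)

lemma cf_den_cf_num_det: "cf_den \<alpha> k * cf_num \<alpha> (Suc k) - cf_den \<alpha> (Suc k) * cf_num \<alpha> k = (-1) ^ k"
proof (induction k)
  case 0
  then show ?case by simp
next
  case (Suc k)
  have "cf_den \<alpha> (Suc k) * cf_num \<alpha> (Suc (Suc k)) - cf_den \<alpha> (Suc (Suc k)) * cf_num \<alpha> (Suc k)
      = - (cf_den \<alpha> k * cf_num \<alpha> (Suc k) - cf_den \<alpha> (Suc k) * cf_num \<alpha> k)"
    by (simp add: algebra_simps)
  then show ?case using Suc.IH by simp
qed

lemma coprime_cf_num_cf_den: "coprime (cf_num \<alpha> k) (cf_den \<alpha> k)"
proof (rule coprimeI)
  fix c assume "c dvd cf_num \<alpha> k" "c dvd cf_den \<alpha> k"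
  then have "c dvd cf_den \<alpha> k * cf_num \<alpha> (Suc k) - cf_den \<alpha> (Suc k) * cf_num \<alpha> k"
    by (intro dvd_diff dvd_mult2 dvd_mult) auto
  then show "is_unit c"
    using dvd_unit_imp_unit[of c "(-1) ^ k"] by (simp add: cf_den_cf_num_det)
qed

lemma frac_irrational:
  assumes "x \<notin> \<rat>"
  shows "frac x \<notin> \<rat> \<and> 0 < frac x"
proof -
  have "frac x \<notin> \<rat>"
  proof
    assume "frac x \<in> \<rat>"
    then have "frac x + of_int \<lfloor>x\<rfloor> \<in> \<rat>" by simp
    then show False using assms by (simp add: frac_def)
  qed
  moreover have "frac x \<noteq> 0" using calculation Rats_0 by metis
  ultimately show ?thesis using frac_ge_0[of x] by linarith
qed

context
  fixes \<alpha> :: real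
  assumes irrational: "\<alpha> \<notin> \<rat>"
begin

declare cf_rem.simps(2)[simp del] cf_digit.simps(2)[simp del]

lemma cf_rem_irrational: "cf_rem \<alpha> k \<notin> \<rat> \<and> 0 < cf_rem \<alpha> k"
proof (induction k)
  case 0
  then show ?case using frac_irrational[OF irrational] by simp
next
  case (Suc k)
  then have "1 / cf_rem \<alpha> k \<notin> \<rat>"
    by (metis Rats_1 Rats_divide div_by_1 divide_divide_eq_right mult_1)
  then show ?case
    using frac_irrational by (simp only: cf_rem.simps(2))
qed

lemma cf_rem_pos: "0 < cf_rem \<alpha> k"
  using cf_rem_irrational by blast

lemma cf_digit_Suc_ge_1: "1 \<le> cf_digit \<alpha> (Suc k)"
proof -
  have "1 \<le> 1 / cf_rem \<alpha> k"
    using cf_rem_pos[of k] cf_rem_less_1[of \<alpha> k] by simp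
  then show ?thesis by (simp add: cf_digit.simps(2))
qed

lemma cf_digit_ge_1: "0 < l \<Longrightarrow> 1 \<le> cf_digit \<alpha> l"
  using cf_digit_Suc_ge_1[of "l - 1"] by simp

lemma sum_nat_cf_digit: "(\<Sum>l=1..k. real (nat (cf_digit \<alpha> l))) = (\<Sum>l=1..k. real_of_int (cf_digit \<alpha> l))"
proof (rule sum.cong)
  fix l assume "l \<in> {1..k}"
  then have "1 \<le> cf_digit \<alpha> l"
    by (intro cf_digit_ge_1) simp
  then show "real (nat (cf_digit \<alpha> l)) = real_of_int (cf_digit \<alpha> l)"
    by simp
qed simp

lemma cf_den_pos_mono_Suc: "1 \<le> cf_den \<alpha> k \<and> cf_den \<alpha> k \<le> cf_den \<alpha> (Suc k)"
proof (induction k)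
  case 0
  then show ?case using cf_digit_Suc_ge_1[of 0] by simp
next
  case (Suc k)
  have "1 * cf_den \<alpha> (Suc k) \<le> cf_digit \<alpha> (Suc (Suc k)) * cf_den \<alpha> (Suc k)"
    using cf_digit_Suc_ge_1[of "Suc k"] Suc.IH by (intro mult_right_mono) auto
  then show ?case using Suc.IH by (simp only: cf_den.simps) linarith
qed

lemma cf_den_pos: "1 \<le> cf_den \<alpha> k"
  using cf_den_pos_mono_Suc by blast

lemma cf_den_mono: "j \<le> k \<Longrightarrow> cf_den \<alpha> j \<le> cf_den \<alpha> k"
proof (induction k rule: dec_induct)
  case (step k)
  then show ?case using cf_den_pos_mono_Suc[of k] by simp
qed simp

lemma cf_den_ge_2: "2 \<le> k \<Longrightarrow> 2 \<le> cf_den \<alpha> k"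
proof -
  assume "2 \<le> k"
  have "2 \<le> cf_den \<alpha> 2"
    using mult_mono[OF cf_digit_Suc_ge_1[of 1] cf_digit_Suc_ge_1[of 0]] cf_digit_Suc_ge_1[of 1]
    by (simp add: numeral_2_eq_2)
  then show ?thesis
    using cf_den_mono[OF \<open>2 \<le> k\<close>] by simp
qed

lemma cf_den_Suc_le: "cf_den \<alpha> (Suc k) \<le> (cf_digit \<alpha> (Suc k) + 1) * cf_den \<alpha> k"
proof (cases k)
  case (Suc j)
  then show ?thesis
    using cf_den_mono[of j k] by (simp add: algebra_simps)
qed simp

lemma nat_cf_den_Suc_le: "nat (cf_den \<alpha> (Suc k)) \<le> (nat (cf_digit \<alpha> (Suc k)) + 1) * nat (cf_den \<alpha> k)"
proof -
  have "nat (cf_den \<alpha> (Suc k)) \<le> nat ((cf_digit \<alpha> (Suc k) + 1) * cf_den \<alpha> k)"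
    using cf_den_Suc_le by (rule nat_mono)
  also have "\<dots> = (nat (cf_digit \<alpha> (Suc k)) + 1) * nat (cf_den \<alpha> k)"
    using cf_digit_Suc_ge_1[of k] cf_den_pos[of k] by (simp add: nat_mult_distrib nat_add_distrib)
  finally show ?thesis .
qed

lemma cf_err_pos: "0 < cf_err \<alpha> k"
  unfolding cf_err_def using cf_rem_pos by (simp add: prod_pos)

lemma cf_den_mult_sub_cf_num:
  "cf_den \<alpha> k * \<alpha> - cf_num \<alpha> k = (-1) ^ k * cf_err \<alpha> k
   \<and> cf_den \<alpha> (Suc k) * \<alpha> - cf_num \<alpha> (Suc k) = (-1) ^ Suc k * cf_err \<alpha> (Suc k)"
proof (induction k)
  case 0
  have "real_of_int (cf_digit \<alpha> 1) * frac \<alpha> = 1 - frac \<alpha> * cf_rem \<alpha> 1"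
    using cf_rem_inverse[of \<alpha> 0] cf_rem_pos[of 0] by (simp add: field_simps)
  moreover have "cf_err \<alpha> 0 = frac \<alpha>" "cf_err \<alpha> 1 = frac \<alpha> * cf_rem \<alpha> 1"
    by (simp_all add: cf_err_def)
  moreover have "cf_den \<alpha> 1 * \<alpha> - cf_num \<alpha> 1 = cf_digit \<alpha> 1 * frac \<alpha> - 1"
    by (simp add: frac_def algebra_simps)
  ultimately show ?case
    by (simp add: frac_def)
next
  case (Suc k)
  let ?a = "real_of_int (cf_digit \<alpha> (Suc (Suc k)))"
  have a: "?a * cf_rem \<alpha> (Suc k) = 1 - cf_rem \<alpha> (Suc k) * cf_rem \<alpha> (Suc (Suc k))"
    using cf_rem_inverse[of \<alpha> "Suc k"] cf_rem_pos[of "Suc k"] by (simp add: field_simps)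
  have "?a * cf_err \<alpha> (Suc k) = cf_err \<alpha> k * (?a * cf_rem \<alpha> (Suc k))"
    by (simp add: cf_err_Suc mult_ac)
  also have "\<dots> = cf_err \<alpha> k - cf_err \<alpha> (Suc (Suc k))"
    unfolding a by (simp add: cf_err_Suc algebra_simps)
  finally have err: "cf_err \<alpha> k - ?a * cf_err \<alpha> (Suc k) = cf_err \<alpha> (Suc (Suc k))"
    by simp
  have "cf_den \<alpha> (Suc (Suc k)) * \<alpha> - cf_num \<alpha> (Suc (Suc k))
      = ?a * (cf_den \<alpha> (Suc k) * \<alpha> - cf_num \<alpha> (Suc k)) + (cf_den \<alpha> k * \<alpha> - cf_num \<alpha> k)"
    by (simp add: algebra_simps)
  also have "\<dots> = (-1) ^ k * (cf_err \<alpha> k - ?a * cf_err \<alpha> (Suc k))"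
    by (simp only: Suc.IH) (simp add: algebra_simps)
  also have "\<dots> = (-1) ^ Suc (Suc k) * cf_err \<alpha> (Suc (Suc k))"
    by (simp add: err)
  finally show ?case
    using Suc.IH by simp
qed

lemma cf_err_less: "cf_err \<alpha> k < 1 / cf_den \<alpha> (Suc k)"
proof -
  have "cf_den \<alpha> (Suc k) * cf_err \<alpha> k + cf_den \<alpha> k * cf_err \<alpha> (Suc k) = 1"
  proof -
    have "(-1) ^ k * (cf_den \<alpha> (Suc k) * cf_err \<alpha> k + cf_den \<alpha> k * cf_err \<alpha> (Suc k))
        = cf_den \<alpha> (Suc k) * ((-1) ^ k * cf_err \<alpha> k) - cf_den \<alpha> k * ((-1) ^ Suc k * cf_err \<alpha> (Suc k))"
      by (simp add: algebra_simps)
    also have "\<dots> = cf_den \<alpha> (Suc k) * (cf_den \<alpha> k * \<alpha> - cf_num \<alpha> k)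
                     - cf_den \<alpha> k * (cf_den \<alpha> (Suc k) * \<alpha> - cf_num \<alpha> (Suc k))"
      using cf_den_mult_sub_cf_num[of k] by simp
    also have "\<dots> = of_int (cf_den \<alpha> k * cf_num \<alpha> (Suc k) - cf_den \<alpha> (Suc k) * cf_num \<alpha> k)"
      by (simp add: algebra_simps)
    also have "\<dots> = (-1) ^ k"
      by (simp add: cf_den_cf_num_det)
    finally show ?thesis by simp
  qed
  moreover have "0 < cf_den \<alpha> k * cf_err \<alpha> (Suc k)"
    using cf_den_pos[of k] cf_err_pos[of "Suc k"] by simp
  ultimately have "cf_den \<alpha> (Suc k) * cf_err \<alpha> k < 1"
    by linarith
  then show ?thesis
    using cf_den_pos[of "Suc k"] by (simp add: pos_less_divide_eq mult.commute)
qed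

lemma abs_cf_den_mult_sub_cf_num_less:
  "\<bar>cf_den \<alpha> k * \<alpha> - cf_num \<alpha> k\<bar> < 1 / cf_den \<alpha> (Suc k)"
  using cf_den_mult_sub_cf_num[of k] cf_err_pos[of k] cf_err_less[of k] by (simp add: abs_mult)

lemma cf_den_dist_lower_bound:
  fixes t :: nat and u :: int
  assumes t: "1 \<le> t" "int t < cf_den \<alpha> K"
  shows "1 / (cf_den \<alpha> K * cf_den \<alpha> (Suc K)) \<le> \<bar>real t * \<alpha> - u\<bar>"
proof -
  define Q where "Q = cf_den \<alpha> K"
  define Q' where "Q' = cf_den \<alpha> (Suc K)"
  define p where "p = cf_num \<alpha> K"
  define e where "e = Q * \<alpha> - p"
  have Q: "1 \<le> Q" "Q \<le> Q'"
    unfolding Q_def Q'_def using cf_den_pos cf_den_mono by auto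
  have e: "\<bar>e\<bar> < 1 / Q'"
    unfolding e_def Q_def Q'_def p_def by (rule abs_cf_den_mult_sub_cf_num_less)
  have "int t * p - u * Q \<noteq> 0"
  proof
    assume "int t * p - u * Q = 0"
    then have "Q dvd int t * p" by (metis dvd_triv_right eq_iff_diff_eq_0)
    then have "Q dvd int t"
      using coprime_cf_num_cf_den[of \<alpha> K]
      unfolding Q_def p_def by (simp add: coprime_commute coprime_dvd_mult_left_iff)
    then show False
      using t zdvd_imp_le[of Q "int t"] unfolding Q_def by simp
  qed
  then have "1 \<le> \<bar>real_of_int (int t * p - u * Q)\<bar>"
    by linarith
  also have "real_of_int (int t * p - u * Q) = Q * (real t * \<alpha> - u) - real t * e"
    unfolding e_def by (simp add: algebra_simps)
  also have "\<bar>\<dots>\<bar> \<le> Q * \<bar>real t * \<alpha> - u\<bar> + real t * \<bar>e\<bar>"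
    using abs_triangle_ineq4[of "Q * (real t * \<alpha> - u)" "real t * e"] Q by (simp add: abs_mult)
  finally have "1 - real t * \<bar>e\<bar> \<le> Q * \<bar>real t * \<alpha> - u\<bar>"
    by simp
  moreover have "real t * \<bar>e\<bar> \<le> 1 - 1 / Q'"
  proof -
    have "real t \<le> Q' - 1"
      using t Q unfolding Q_def by linarith
    have "real t * \<bar>e\<bar> \<le> real t * (1 / Q')"
      using e by (intro mult_left_mono) auto
    also have "\<dots> \<le> (Q' - 1) / Q'"
      using \<open>real t \<le> Q' - 1\<close> Q by (simp add: divide_right_mono)
    also have "\<dots> = 1 - 1 / Q'"
      using Q by (simp add: diff_divide_distrib)
    finally show ?thesis .
  qed
  ultimately have "1 / Q' \<le> Q * \<bar>real t * \<alpha> - u\<bar>"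
    by linarith
  then show ?thesis
    using Q unfolding Q_def[symmetric] Q'_def[symmetric] by (simp add: field_simps)
qed

lemma frac_mult_sub_lower_bound:
  fixes m s :: nat and r :: int
  assumes "1 \<le> m" "0 < s" "real m < cf_den \<alpha> K / s"
  shows "1 / (s * cf_den \<alpha> K * cf_den \<alpha> (Suc K)) \<le> frac (real m * \<alpha> - r / s)"
proof -
  define x where "x = real m * \<alpha> - r / s"
  have "real (s * m) < cf_den \<alpha> K"
    using assms(2,3) by (simp add: field_simps)
  then have "int (s * m) < cf_den \<alpha> K"
    by (metis of_int_less_iff of_int_of_nat_eq)
  have "real (s * m) * \<alpha> - of_int (r + s * \<lfloor>x\<rfloor>) = s * frac x"
    using assms(2) unfolding x_def frac_def by (simp add: field_simps)
  moreover have "1 / (cf_den \<alpha> K * cf_den \<alpha> (Suc K)) \<le> \<bar>real (s * m) * \<alpha> - of_int (r + s * \<lfloor>x\<rfloor>)\<bar>"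
    using assms(1,2) \<open>int (s * m) < cf_den \<alpha> K\<close> by (intro cf_den_dist_lower_bound) auto
  ultimately have "1 / (cf_den \<alpha> K * cf_den \<alpha> (Suc K)) \<le> s * frac x"
    by (simp add: frac_ge_0)
  then have "1 / (cf_den \<alpha> K * cf_den \<alpha> (Suc K)) / s \<le> frac x"
    using assms(2) by (metis pos_divide_le_eq of_nat_0_less_iff mult.commute)
  then show ?thesis
    unfolding x_def by (simp add: mult_ac)
qed

lemma birkhoff_S_ln_frac_cf_den_block:
  assumes q: "0 \<le> q" "q < 1" and d: "0 < d"
    and good: "\<forall>n\<in>{1..nat (cf_den \<alpha> j)}. d \<le> frac (real n * \<alpha> + y - q)"
  shows "\<bar>birkhoff_S (\<lambda>x. ln (frac (x - q))) (nat (cf_den \<alpha> j)) \<alpha> y\<bar>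
           \<le> 3 * \<bar>ln d\<bar> + 3 * ln (cf_den \<alpha> j) + 1"
proof -
  let ?Q = "nat (cf_den \<alpha> j)"
  have Q: "int ?Q = cf_den \<alpha> j" "real ?Q = cf_den \<alpha> j" "1 \<le> ?Q"
    using cf_den_pos[of j] by auto
  have "\<bar>(\<Sum>n=1..?Q. ln (frac (y - q + real n * \<alpha>))) + ?Q\<bar> \<le> 3 * \<bar>ln d\<bar> + 3 * ln ?Q + 1"
  proof (rule sum_ln_frac_orbit_bound[OF Q(3) _ _ d])
    show "coprime (cf_num \<alpha> j) (int ?Q)"
      using coprime_cf_num_cf_den Q(1) by simp
    have "\<bar>cf_den \<alpha> j * \<alpha> - cf_num \<alpha> j\<bar> < 1 / cf_den \<alpha> (Suc j)"
      by (rule abs_cf_den_mult_sub_cf_num_less)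
    also have "\<dots> \<le> 1 / cf_den \<alpha> j"
      using cf_den_pos[of j] cf_den_mono[of j "Suc j"]
      by (simp add: frac_le)
    finally show "\<bar>real ?Q * \<alpha> - cf_num \<alpha> j\<bar> < 1 / ?Q"
      using Q(2) by simp
    show "\<forall>n\<in>{1..?Q}. d \<le> frac (y - q + real n * \<alpha>)"
      using good by (simp add: algebra_simps)
  qed
  then show ?thesis
    using q Q(2) by (simp add: birkhoff_S_ln_frac)
qed

lemma birkhoff_S_ln_frac_remainder_bound:
  fixes r s N b N' K :: nat
  assumes s: "0 < s" "r < s" and N: "real N < cf_den \<alpha> K / s"
    and N_split: "N = b * nat (cf_den \<alpha> (K - 1)) + N'" and N': "int N' < cf_den \<alpha> (K - 1)"
  defines "d \<equiv> 1 / (s * cf_den \<alpha> K * cf_den \<alpha> (Suc K))"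
  shows "\<bar>birkhoff_S (\<lambda>x. ln (frac (x - r / s))) N' \<alpha> (real b * cf_den \<alpha> (K - 1) * \<alpha>)\<bar>
           \<le> (\<Sum>l=1..K-1. real_of_int (cf_digit \<alpha> l)) * (3 * \<bar>ln d\<bar> + 3 * ln (cf_den \<alpha> (Suc K)) + 1)"
proof -
  let ?y = "real b * cf_den \<alpha> (K - 1) * \<alpha>" and ?B = "3 * \<bar>ln d\<bar> + 3 * ln (cf_den \<alpha> (Suc K)) + 1"
  have d: "0 < d"
    unfolding d_def using s cf_den_pos[of K] cf_den_pos[of "Suc K"] by simp
  have q: "0 \<le> real r / s" "real r / s < 1"
    using s by auto
  have good: "\<forall>n\<in>{1..N'}. d \<le> frac (real n * \<alpha> + ?y - r / s)"
  proof
    fix n assume n: "n \<in> {1..N'}"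
    define m where "m = b * nat (cf_den \<alpha> (K - 1)) + n"
    have "real m < cf_den \<alpha> K / s"
      using n N unfolding m_def N_split by simp
    then have "d \<le> frac (real m * \<alpha> - of_int (int r) / s)"
      unfolding d_def using n s by (intro frac_mult_sub_lower_bound) (auto simp: m_def)
    then show "d \<le> frac (real n * \<alpha> + ?y - r / s)"
      unfolding m_def using cf_den_pos[of "K - 1"] by (simp add: algebra_simps)
  qed
  have "\<bar>birkhoff_S (\<lambda>x. ln (frac (x - r / s))) N' \<alpha> ?y\<bar> \<le> (\<Sum>l=1..K-1. real (nat (cf_digit \<alpha> l))) * ?B"
  proof (rule birkhoff_S_greedy_blocks_bound[where Qs = "\<lambda>j. nat (cf_den \<alpha> j)" and P = "\<lambda>x. d \<le> frac (x - r / s)"])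
    show "\<bar>birkhoff_S (\<lambda>x. ln (frac (x - r / s))) (nat (cf_den \<alpha> j)) \<alpha> y'\<bar> \<le> ?B"
      if "j < K - 1" "\<forall>n\<in>{1..nat (cf_den \<alpha> j)}. d \<le> frac (real n * \<alpha> + y' - r / s)" for j y'
    proof -
      have "cf_den \<alpha> j \<le> cf_den \<alpha> (Suc K)"
        using that(1) by (intro cf_den_mono) simp
      then have "ln (cf_den \<alpha> j) \<le> ln (cf_den \<alpha> (Suc K))"
        using cf_den_pos[of j] by simp
      then show ?thesis
        using birkhoff_S_ln_frac_cf_den_block[OF q d that(2)] by simp
    qed
    show "1 \<le> nat (cf_den \<alpha> j)" for j
      using cf_den_pos[of j] by simp
  qed (use N' good nat_cf_den_Suc_le cf_den_pos[of "Suc K"] in \<open>auto simp: algebra_simps\<close>)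
  then show ?thesis
    by (simp only: sum_nat_cf_digit)
qed

lemma block_bound_le_mult_ln_cf_den:
  assumes "0 < s" "1 \<le> K"
  shows "3 * \<bar>ln (1 / (real s * cf_den \<alpha> K * cf_den \<alpha> (Suc K)))\<bar> + 3 * ln (cf_den \<alpha> (Suc K)) + 1
           \<le> (9 + (3 * ln s + 1) / ln 2) * ln (cf_den \<alpha> (Suc K))"
proof -
  let ?L = "ln (cf_den \<alpha> (Suc K))"
  have qK: "1 \<le> real_of_int (cf_den \<alpha> K)" "cf_den \<alpha> K \<le> cf_den \<alpha> (Suc K)"
    using cf_den_pos[of K] cf_den_mono[of K "Suc K"] by auto
  have L2: "ln 2 \<le> ?L"
    using cf_den_ge_2[of "Suc K"] assms(2) by simp
  have "ln (1 / (real s * cf_den \<alpha> K * cf_den \<alpha> (Suc K))) = - (ln s + ln (cf_den \<alpha> K) + ?L)"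
    using assms(1) qK by (simp add: ln_div ln_mult)
  moreover have "0 \<le> ln s" "0 \<le> ln (cf_den \<alpha> K)" "0 \<le> ?L"
    using assms(1) qK by auto
  ultimately have "\<bar>ln (1 / (real s * cf_den \<alpha> K * cf_den \<alpha> (Suc K)))\<bar> = ln s + ln (cf_den \<alpha> K) + ?L"
    by linarith
  also have "\<dots> \<le> ln s + 2 * ?L"
    using qK by simp
  finally have "3 * \<bar>ln (1 / (real s * cf_den \<alpha> K * cf_den \<alpha> (Suc K)))\<bar> + 3 * ?L + 1
      \<le> 9 * ?L + (3 * ln s + 1)"
    by linarith
  also have "3 * ln s + 1 \<le> (3 * ln s + 1) * (?L / ln 2)"
  proof -
    have "1 \<le> ?L / ln 2" "0 \<le> 3 * ln s + 1"
      using L2 assms(1) by auto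
    then show ?thesis
      using mult_left_mono[of 1 "?L / ln 2" "3 * ln s + 1"] by simp
  qed
  finally show ?thesis
    by (simp add: algebra_simps)
qed

end

theorem proposition4p3:
  fixes \<alpha> :: real and r s :: nat
  assumes irr: "\<alpha> \<notin> \<rat>"
    and alpha_range: "0 < \<alpha>" "\<alpha> < 1"
    and s_pos: "s > 0" and coprime_rs: "coprime r s" and r_lt: "r < s"
  shows "\<exists>C>0. \<forall>K N b N'. K \<ge> 1 \<longrightarrow> real N < real_of_int (cf_den \<alpha> K) / real s
      \<longrightarrow> N = b * nat (cf_den \<alpha> (K - 1)) + N' \<longrightarrow> int N' < cf_den \<alpha> (K - 1)
      \<longrightarrow> \<bar>birkhoff_S (\<lambda>x. ln (frac (x - real r / real s))) N' \<alpha>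
              (real b * real_of_int (cf_den \<alpha> (K - 1)) * \<alpha>)\<bar>
          \<le> C * ln (real_of_int (cf_den \<alpha> (K + 1))) * (\<Sum>l=1..K-1. real_of_int (cf_digit \<alpha> l))"
proof -
  define C where "C = 9 + (3 * ln s + 1) / ln 2"
  have "0 < C"
    unfolding C_def using s_pos by (simp add: add_pos_nonneg)
  moreover have "\<bar>birkhoff_S (\<lambda>x. ln (frac (x - real r / real s))) N' \<alpha>
              (real b * real_of_int (cf_den \<alpha> (K - 1)) * \<alpha>)\<bar>
          \<le> C * ln (real_of_int (cf_den \<alpha> (K + 1))) * (\<Sum>l=1..K-1. real_of_int (cf_digit \<alpha> l))"
    if "K \<ge> 1" "real N < real_of_int (cf_den \<alpha> K) / real s"
      "N = b * nat (cf_den \<alpha> (K - 1)) + N'" "int N' < cf_den \<alpha> (K - 1)" for K N b N'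
  proof -
    have digits: "0 \<le> (\<Sum>l=1..K-1. real_of_int (cf_digit \<alpha> l))"
      using sum_nat_cf_digit[OF irr, of "K - 1"] sum_nonneg[of "{1..K-1}" "\<lambda>l. real (nat (cf_digit \<alpha> l))"]
      by simp
    show ?thesis
      using birkhoff_S_ln_frac_remainder_bound[OF irr s_pos r_lt that(2-4)]
        mult_left_mono[OF block_bound_le_mult_ln_cf_den[OF irr s_pos that(1)] digits]
      unfolding C_def by (simp add: mult_ac)
  qed
  ultimately show ?thesis by blast
qed

end
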